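(* Let $X$ be a complete CAT(0) space and $f:X\to(-\infty,\infty]$ a convex, proper, lower semicontinuous function attaining its minimum. Let $\psi:[0,\infty)\to[0,\infty)$ be an increasing function vanishing only at $0$, and $(\gamma_n)$ a sequence in $(0,\infty)$ with $\sum_{n=0}^\infty\gamma_n^2=\infty$ having rate of divergence $\theta$. Let $b\in\mathbb{N}$, $p\in Argmin(f)$ and $C$ the closed ball of center $p$ and radius $b$. Suppose $f$ is uniformly convex on $C$ with modulus $\psi$. For $x\in C$ let $x_0:=x$ and $x_{n+1}:=J_{\gamma_n}x_n$. Then $p$ is the unique minimizer of $f$ in $C$ and $(x_n)$ converges strongly to $p$ with rate of convergence $$\Omega_{b,\theta,\psi}(k):=\theta\left(b^2\left(\left\lceil\frac{2b}{2\psi\left(\frac1{k+1}\right)}\right\rceil+1\right)^2\right)+1.$$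
   Context: A geodesic space $(X,d)$ is CAT(0) if for all $z\in X$, all geodesics $\gamma:[a,b]\to X$ and all $t\in[0,1]$, $d^2(z,\gamma((1-t)a+tb))\le(1-t)d^2(z,\gamma(a))+td^2(z,\gamma(b))-t(1-t)d^2(\gamma(a),\gamma(b))$; $(1-t)x+ty$ denotes the point at distance $t\,d(x,y)$ from $x$ on the unique geodesic from $x$ to $y$. $Argmin(f)$ is the set of minimizers of $f$. $J_\gamma(x):=\arg\min_{y\in X}\left[f(y)+\frac1{2\gamma}d^2(x,y)\right]$ (exists uniquely). $f$ is uniformly convex on $C$ with modulus $\psi$ if for all $x,y\in C$, $t\in[0,1]$: $f((1-t)x+ty)\le(1-t)f(x)+tf(y)-t(1-t)\psi(d(x,y))$. A rate of divergence for $\sum\gamma_n^2=\infty$ is $\theta:\mathbb{N}\to\mathbb{N}$ with $\sum_{n=0}^{\theta(K)}\gamma_n^2\ge K$ for all $K$. A rate of convergence of $a_n\to a$ is $\Phi$ with $d(a_n,a)\le\frac1{k+1}$ for all $k$ and $n\ge\Phi(k)$. *)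

theory Defs
  imports "HOL-Analysis.Analysis"
begin

definition is_geodesic :: "(real \<Rightarrow> 'a::metric_space) \<Rightarrow> real \<Rightarrow> real \<Rightarrow> bool" where
  "is_geodesic g a b \<longleftrightarrow> a \<le> b \<and>
     (\<forall>s\<in>{a..b}. \<forall>t\<in>{a..b}. dist (g s) (g t) = \<bar>s - t\<bar>)"

definition geodesic_space :: "'a::metric_space itself \<Rightarrow> bool" where
  "geodesic_space _ \<longleftrightarrow>
     (\<forall>x y::'a. \<exists>g a b. is_geodesic g a b \<and> g a = x \<and> g b = y)"

definition CAT0 :: "'a::metric_space itself \<Rightarrow> bool" where
  "CAT0 T \<longleftrightarrow> geodesic_space T \<and>
     (\<forall>(z::'a) g a b t. is_geodesic g a b \<longrightarrow> t \<in> {0..1} \<longrightarrow>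
        (dist z (g ((1 - t) * a + t * b)))\<^sup>2
          \<le> (1 - t) * (dist z (g a))\<^sup>2 + t * (dist z (g b))\<^sup>2
             - t * (1 - t) * (dist (g a) (g b))\<^sup>2)"

text \<open>(1-t)x + ty: the point at distance t d(x,y) from x on the (unique) geodesic from x to y.\<close>
definition geo_comb :: "real \<Rightarrow> 'a::metric_space \<Rightarrow> 'a \<Rightarrow> 'a" where
  "geo_comb t x y = (THE z. \<exists>g a b. is_geodesic g a b \<and> g a = x \<and> g b = y \<and>
       z = g ((1 - t) * a + t * b))"

definition convex_fun :: "('a::metric_space \<Rightarrow> ereal) \<Rightarrow> bool" where
  "convex_fun f \<longleftrightarrow> (\<forall>x y t. t \<in> {0..1} \<longrightarrow>
     f (geo_comb t x y) \<le> ereal (1 - t) * f x + ereal t * f y)"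

definition proper_fun :: "('a \<Rightarrow> ereal) \<Rightarrow> bool" where
  "proper_fun f \<longleftrightarrow> (\<forall>x. f x \<noteq> -\<infinity>) \<and> (\<exists>x. f x \<noteq> \<infinity>)"

definition lsc_fun :: "('a::topological_space \<Rightarrow> ereal) \<Rightarrow> bool" where
  "lsc_fun f \<longleftrightarrow> (\<forall>c. closed {x. f x \<le> c})"

definition Argmin :: "('a \<Rightarrow> ereal) \<Rightarrow> 'a set" where
  "Argmin f = {x. \<forall>y. f x \<le> f y}"

definition unif_convex_on :: "('a::metric_space \<Rightarrow> ereal) \<Rightarrow> 'a set \<Rightarrow> (real \<Rightarrow> real) \<Rightarrow> bool" where
  "unif_convex_on f C \<psi> \<longleftrightarrow> (\<forall>x\<in>C. \<forall>y\<in>C. \<forall>t\<in>{0..1}.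
     f (geo_comb t x y) \<le> ereal (1 - t) * f x + ereal t * f y
                          - ereal (t * (1 - t) * \<psi> (dist x y)))"

definition resolvent :: "('a::metric_space \<Rightarrow> ereal) \<Rightarrow> real \<Rightarrow> 'a \<Rightarrow> 'a" where
  "resolvent f \<gamma> x = (THE y. \<forall>z. f y + ereal ((dist x y)\<^sup>2 / (2 * \<gamma>))
                             \<le> f z + ereal ((dist x z)\<^sup>2 / (2 * \<gamma>)))"

definition divergence_rate :: "(nat \<Rightarrow> real) \<Rightarrow> (nat \<Rightarrow> nat) \<Rightarrow> bool" where
  "divergence_rate \<gamma> \<theta> \<longleftrightarrow> (\<forall>K. (\<Sum>n=0..\<theta> K. (\<gamma> n)\<^sup>2) \<ge> real K)"

definition Omega :: "nat \<Rightarrow> (nat \<Rightarrow> nat) \<Rightarrow> (real \<Rightarrow> real) \<Rightarrow> nat \<Rightarrow> nat" where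
  "Omega b \<theta> \<psi> k = \<theta> (b\<^sup>2 * (nat \<lceil>(2 * real b) / (2 * \<psi> (1 / (real k + 1)))\<rceil> + 1)\<^sup>2) + 1"

end

theory Submission
  imports Defs
begin

text \<open>The resolvent is well defined: by the CAT(0) inequality at midpoints, every
minimizing sequence of y \<mapsto> f y + d(x,y)^2/(2 gamma) is Cauchy, and lower
semicontinuity makes its limit the (unique) minimizer.
Each resolvent step satisfies the Fejer-type inequality
  d(x_{n+1},p)^2 + 2 gamma_n (f x_{n+1} - f p) \<le> d(x_n,p)^2,
obtained by comparing x_{n+1} with the points of the geodesic towards p in the
CAT(0) inequality. Hence the iterates stay in C, where uniform convexity at the
midpoint of x_{n+1} and p gives f x_{n+1} - f p \<ge> psi(d(x_{n+1},p))/2. As long as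
d(x_n,p) > eps, every step therefore lowers d^2 by at least gamma_n psi(eps), so both
each gamma_j and their sum up to the current index are bounded by b^2/psi(eps), whence
the sum of the gamma_j^2 is at most (b^2/psi(eps))^2; the rate of divergence makes this
impossible beyond the index Omega.\<close>

lemma CAT0_geo_comb:
  assumes cat: "CAT0 TYPE('a::metric_space)" and t: "0 \<le> t" "t \<le> 1"
    and g: "is_geodesic g a b" "g a = x" "g b = (y::'a)"
  shows "geo_comb t x y = g ((1 - t) * a + t * b)"
  unfolding geo_comb_def
proof (rule the_equality)
  show "\<exists>g' a' b'. is_geodesic g' a' b' \<and> g' a' = x \<and> g' b' = y \<and>
          g ((1 - t) * a + t * b) = g' ((1 - t) * a' + t * b')"
    using g by blast
next
  fix w
  assume "\<exists>g' a' b'. is_geodesic g' a' b' \<and> g' a' = x \<and> g' b' = y \<and>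
            w = g' ((1 - t) * a' + t * b')"
  then obtain g' a' b' where g': "is_geodesic g' a' b'" "g' a' = x" "g' b' = y"
      and w: "w = g' ((1 - t) * a' + t * b')"
    by blast
  have ab: "a' \<le> b'" using g'(1) unfolding is_geodesic_def by auto
  have s: "(1 - t) * a' + t * b' \<in> {a'..b'}"
    using ab t mult_right_mono[OF ab, of t] mult_right_mono[OF ab, of "1 - t"]
    by (auto simp: algebra_simps)
  have dxy: "dist x y = b' - a'" and dwx: "dist w x = t * (b' - a')"
    and dwy: "dist w y = (1 - t) * (b' - a')"
    using g' w s ab t unfolding is_geodesic_def by (force, auto simp: algebra_simps abs_if)
  \<comment> \<open>w has the distances to x and y that force equality in the CAT(0) inequality at w\<close>
  have "(dist w (g ((1 - t) * a + t * b)))\<^sup>2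
      \<le> (1 - t) * (t * (b' - a'))\<^sup>2 + t * ((1 - t) * (b' - a'))\<^sup>2 - t * (1 - t) * (b' - a')\<^sup>2"
    using cat t g dxy dwx dwy unfolding CAT0_def by (metis atLeastAtMost_iff)
  also have "\<dots> = 0" by (simp add: algebra_simps power2_eq_square)
  finally show "w = g ((1 - t) * a + t * b)" by simp
qed

lemma CAT0_geo_comb_ineq:
  assumes cat: "CAT0 TYPE('a::metric_space)" and t: "0 \<le> t" "t \<le> 1"
  shows "(dist z (geo_comb t x y))\<^sup>2
           \<le> (1 - t) * (dist z x)\<^sup>2 + t * (dist z y)\<^sup>2 - t * (1 - t) * (dist x (y::'a))\<^sup>2"
proof -
  from cat obtain g a b where g: "is_geodesic g a b" "g a = x" "g b = y"
    unfolding CAT0_def geodesic_space_def by blast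
  then show ?thesis
    using cat t CAT0_geo_comb[OF cat t g] unfolding CAT0_def by auto
qed

definition prox_objective :: "('a::metric_space \<Rightarrow> ereal) \<Rightarrow> real \<Rightarrow> 'a \<Rightarrow> 'a \<Rightarrow> ereal" where
  "prox_objective f \<gamma> x y = f y + ereal ((dist x y)\<^sup>2 / (2 * \<gamma>))"

lemma resolvent_prox_objective:
  "resolvent f \<gamma> x = (THE y. \<forall>z. prox_objective f \<gamma> x y \<le> prox_objective f \<gamma> x z)"
  unfolding resolvent_def prox_objective_def ..

lemma prox_objective_geo_comb_le:
  assumes cat: "CAT0 TYPE('a::metric_space)" and conv: "convex_fun f" and \<gamma>: "\<gamma> > 0"
    and t: "0 \<le> t" "t \<le> 1" and fu: "f u = ereal a" and fv: "f (v::'a) = ereal c"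
  shows "prox_objective f \<gamma> x (geo_comb t u v)
           \<le> ereal ((1 - t) * (a + (dist x u)\<^sup>2 / (2 * \<gamma>)) + t * (c + (dist x v)\<^sup>2 / (2 * \<gamma>))
                    - t * (1 - t) * (dist u v)\<^sup>2 / (2 * \<gamma>))"
proof -
  have "f (geo_comb t u v) \<le> ereal ((1 - t) * a + t * c)"
    using conv[unfolded convex_fun_def, rule_format, of t u v] t fu fv by simp
  moreover have "(dist x (geo_comb t u v))\<^sup>2 / (2 * \<gamma>)
      \<le> ((1 - t) * (dist x u)\<^sup>2 + t * (dist x v)\<^sup>2 - t * (1 - t) * (dist u v)\<^sup>2) / (2 * \<gamma>)"
    using CAT0_geo_comb_ineq[OF cat t] \<gamma> by (intro divide_right_mono) auto
  ultimately have "prox_objective f \<gamma> x (geo_comb t u v)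
      \<le> ereal ((1 - t) * a + t * c)
         + ereal (((1 - t) * (dist x u)\<^sup>2 + t * (dist x v)\<^sup>2 - t * (1 - t) * (dist u v)\<^sup>2) / (2 * \<gamma>))"
    unfolding prox_objective_def by (intro add_mono) auto
  also have "\<dots> = ereal ((1 - t) * (a + (dist x u)\<^sup>2 / (2 * \<gamma>)) + t * (c + (dist x v)\<^sup>2 / (2 * \<gamma>))
                    - t * (1 - t) * (dist u v)\<^sup>2 / (2 * \<gamma>))"
    using \<gamma> by (simp add: field_simps)
  finally show ?thesis .
qed

lemma prox_objective_midpoint_le:
  assumes cat: "CAT0 TYPE('a::metric_space)" and conv: "convex_fun f" and \<gamma>: "\<gamma> > 0"
    and fu: "f u \<noteq> -\<infinity>" and fv: "f (v::'a) \<noteq> -\<infinity>"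
    and hu: "prox_objective f \<gamma> x u = ereal hu" and hv: "prox_objective f \<gamma> x v = ereal hv"
  shows "prox_objective f \<gamma> x (geo_comb (1/2) u v) \<le> ereal ((hu + hv) / 2 - (dist u v)\<^sup>2 / (8 * \<gamma>))"
proof -
  have fu': "f u = ereal (hu - (dist x u)\<^sup>2 / (2 * \<gamma>))"
    using fu hu unfolding prox_objective_def by (cases "f u") auto
  have fv': "f v = ereal (hv - (dist x v)\<^sup>2 / (2 * \<gamma>))"
    using fv hv unfolding prox_objective_def by (cases "f v") auto
  from prox_objective_geo_comb_le[OF cat conv \<gamma> _ _ fu' fv', of "1/2" x] show ?thesis
    by (simp add: field_simps)
qed

lemma prox_objective_finite:
  assumes lb: "\<forall>z. ereal L \<le> f z" and fin: "prox_objective f \<gamma> x y \<noteq> \<infinity>"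
  obtains a where "f y = ereal a" "prox_objective f \<gamma> x y = ereal (a + (dist x y)\<^sup>2 / (2 * \<gamma>))"
proof -
  have "f y \<noteq> -\<infinity>" using lb[rule_format, of y] by auto
  moreover have "f y \<noteq> \<infinity>" using fin unfolding prox_objective_def by auto
  ultimately show ?thesis using that unfolding prox_objective_def by (cases "f y") auto
qed

lemma lsc_fun_tendsto_le:
  assumes lsc: "lsc_fun f" and y: "y \<longlonglongrightarrow> l" and c: "c \<longlonglongrightarrow> c0"
    and le: "\<And>n. f (y n) \<le> ereal (c n)"
  shows "f l \<le> ereal c0"
proof (rule ereal_le_epsilon2)
  fix e :: real assume e: "0 < e"
  have closed: "closed {z. f z \<le> ereal (c0 + e)}" using lsc unfolding lsc_fun_def by blast
  have "\<forall>\<^sub>F n in sequentially. c n < c0 + e"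
    using order_tendstoD(2)[OF c] e by simp
  then have "\<forall>\<^sub>F n in sequentially. y n \<in> {z. f z \<le> ereal (c0 + e)}"
  proof (rule eventually_mono)
    fix n assume "c n < c0 + e"
    then show "y n \<in> {z. f z \<le> ereal (c0 + e)}" using le[of n] by (simp add: order_trans)
  qed
  from Lim_in_closed_set[OF closed this _ y] show "f l \<le> ereal c0 + ereal e" by simp
qed

lemma Cauchy_if_dist_sq_le:
  fixes y :: "nat \<Rightarrow> 'a::metric_space"
  assumes le: "\<And>m n. (dist (y m) (y n))\<^sup>2 \<le> C * (1 / Suc m + 1 / Suc n)"
  shows "Cauchy y"
proof (rule metric_CauchyI)
  fix e :: real assume e: "0 < e"
  have C: "0 \<le> C" using le[of 0 0] by (simp add: zero_le_mult_iff)
  obtain M :: nat where M: "2 * C / e\<^sup>2 < real M" using reals_Archimedean2 by blast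
  show "\<exists>M. \<forall>m\<ge>M. \<forall>n\<ge>M. dist (y m) (y n) < e"
  proof (intro exI allI impI)
    fix m n assume mn: "M \<le> m" "M \<le> n"
    have "1 / real (Suc m) \<le> 1 / Suc M" "1 / real (Suc n) \<le> 1 / Suc M"
      using mn by (simp_all add: frac_le)
    then have "1 / real (Suc m) + 1 / Suc n \<le> 2 / Suc M" by simp
    then have "(dist (y m) (y n))\<^sup>2 \<le> C * (2 / Suc M)"
      using le[of m n] C by (meson mult_left_mono order_trans)
    also have "\<dots> < e\<^sup>2"
    proof -
      have "2 * C < e\<^sup>2 * real M" using M e by (simp add: pos_divide_less_eq mult.commute)
      also have "\<dots> < e\<^sup>2 * Suc M" using e by simp
      finally show ?thesis by (simp add: pos_divide_less_eq)
    qed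
    finally show "dist (y m) (y n) < e" using e by (meson power_less_imp_less_base less_imp_le)
  qed
qed

lemma prox_objective_near_min_dist:
  assumes cat: "CAT0 TYPE('a::metric_space)" and conv: "convex_fun f" and \<gamma>: "\<gamma> > 0"
    and \<mu>: "\<forall>z. ereal \<mu> \<le> prox_objective f \<gamma> x z"
    and fu: "f u \<noteq> -\<infinity>" and fv: "f (v::'a) \<noteq> -\<infinity>"
    and hu: "prox_objective f \<gamma> x u = ereal hu" and hv: "prox_objective f \<gamma> x v = ereal hv"
  shows "(dist u v)\<^sup>2 \<le> 4 * \<gamma> * ((hu - \<mu>) + (hv - \<mu>))"
proof -
  define d where "d = (dist u v)\<^sup>2 / (8 * \<gamma>)"
  have "ereal \<mu> \<le> ereal ((hu + hv) / 2 - d)"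
    using \<mu> prox_objective_midpoint_le[OF cat conv \<gamma> fu fv hu hv] order_trans unfolding d_def by blast
  then have "\<mu> \<le> (hu + hv) / 2 - d" by simp
  then have "d \<le> ((hu - \<mu>) + (hv - \<mu>)) / 2" by argo
  then show ?thesis using \<gamma> unfolding d_def by (simp add: pos_divide_le_eq mult.commute)
qed

lemma prox_objective_INF_finite:
  assumes proper: "proper_fun f" and lb: "\<forall>z. ereal L \<le> f z" and \<gamma>: "\<gamma> > 0"
  obtains \<mu> where "(INF z. prox_objective f \<gamma> x z) = ereal \<mu>"
proof -
  have "ereal L \<le> prox_objective f \<gamma> x z" for z
    using add_mono[OF lb[rule_format, of z], of 0] \<gamma> unfolding prox_objective_def by simp
  then have "ereal L \<le> (INF z. prox_objective f \<gamma> x z)" by (rule INF_greatest)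
  moreover obtain w where "f w \<noteq> \<infinity>" using proper unfolding proper_fun_def by blast
  then have "(INF z. prox_objective f \<gamma> x z) \<noteq> \<infinity>"
    using INF_lower[of w UNIV "prox_objective f \<gamma> x"] unfolding prox_objective_def by auto
  ultimately show ?thesis using that by (cases "INF z. prox_objective f \<gamma> x z") auto
qed

lemma prox_objective_minimizing_seq:
  assumes lb: "\<forall>z. ereal L \<le> f z" and \<mu>: "(INF z. prox_objective f \<gamma> x z) = ereal \<mu>"
  obtains y a where "\<And>n. f (y n) = ereal (a n)"
    and "\<And>n. a n + (dist x (y n))\<^sup>2 / (2 * \<gamma>) < \<mu> + 1 / Suc n"
proof -
  have "\<exists>y a. f y = ereal a \<and> a + (dist x y)\<^sup>2 / (2 * \<gamma>) < \<mu> + 1 / Suc n" for n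
  proof -
    have "(INF z. prox_objective f \<gamma> x z) < ereal (\<mu> + 1 / Suc n)" using \<mu> by simp
    then obtain y where y: "prox_objective f \<gamma> x y < ereal (\<mu> + 1 / Suc n)"
      by (auto simp: INF_less_iff)
    then have "prox_objective f \<gamma> x y \<noteq> \<infinity>" by auto
    then obtain a where "f y = ereal a"
      and "prox_objective f \<gamma> x y = ereal (a + (dist x y)\<^sup>2 / (2 * \<gamma>))"
      by (rule prox_objective_finite[OF lb])
    with y show ?thesis by auto
  qed
  then show ?thesis using that by metis
qed

lemma prox_objective_has_min:
  fixes f :: "'a::complete_space \<Rightarrow> ereal"
  assumes cat: "CAT0 TYPE('a)" and conv: "convex_fun f" and lsc: "lsc_fun f"
    and proper: "proper_fun f" and lb: "\<forall>z. ereal L \<le> f z" and \<gamma>: "\<gamma> > 0"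
  shows "\<exists>y. \<forall>z. prox_objective f \<gamma> x y \<le> prox_objective f \<gamma> x z"
proof -
  obtain \<mu> where \<mu>: "(INF z. prox_objective f \<gamma> x z) = ereal \<mu>"
    using prox_objective_INF_finite[OF proper lb \<gamma>] by blast
  then have \<mu>_le: "\<forall>z. ereal \<mu> \<le> prox_objective f \<gamma> x z" by (metis INF_lower UNIV_I)
  obtain y a where fy: "\<And>n. f (y n) = ereal (a n)"
    and near: "\<And>n. a n + (dist x (y n))\<^sup>2 / (2 * \<gamma>) < \<mu> + 1 / Suc n"
    using prox_objective_minimizing_seq[OF lb \<mu>] by blast
  have "(dist (y m) (y n))\<^sup>2 \<le> 4 * \<gamma> * (1 / Suc m + 1 / Suc n)" for m n
  proof -
    have "(dist (y m) (y n))\<^sup>2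
        \<le> 4 * \<gamma> * ((a m + (dist x (y m))\<^sup>2 / (2 * \<gamma>) - \<mu>) + (a n + (dist x (y n))\<^sup>2 / (2 * \<gamma>) - \<mu>))"
      using \<mu>_le fy by (intro prox_objective_near_min_dist[OF cat conv \<gamma>]) (auto simp: prox_objective_def)
    also have "\<dots> \<le> 4 * \<gamma> * (1 / Suc m + 1 / Suc n)"
      using near[of m] near[of n] \<gamma> by (intro mult_left_mono) auto
    finally show ?thesis .
  qed
  then obtain l where l: "y \<longlonglongrightarrow> l"
    using Cauchy_if_dist_sq_le Cauchy_convergent convergent_def by blast
  have "(\<lambda>n. \<mu> + 1 / Suc n - (dist x (y n))\<^sup>2 / (2 * \<gamma>)) \<longlonglongrightarrow> \<mu> + 0 - (dist x l)\<^sup>2 / (2 * \<gamma>)"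
    using l LIMSEQ_Suc[OF lim_1_over_n] \<gamma> by (intro tendsto_intros) auto
  moreover have "f (y n) \<le> ereal (\<mu> + 1 / Suc n - (dist x (y n))\<^sup>2 / (2 * \<gamma>))" for n
    using near[of n] fy by simp
  ultimately have "f l \<le> ereal (\<mu> - (dist x l)\<^sup>2 / (2 * \<gamma>))"
    using lsc_fun_tendsto_le[OF lsc l] by simp
  then have "prox_objective f \<gamma> x l \<le> ereal \<mu>"
    unfolding prox_objective_def by (cases "f l") auto
  then show ?thesis using \<mu>_le order_trans by blast
qed

lemma prox_objective_min_unique:
  assumes cat: "CAT0 TYPE('a::metric_space)" and conv: "convex_fun f" and proper: "proper_fun f"
    and \<gamma>: "\<gamma> > 0"
    and y1: "\<forall>z. prox_objective f \<gamma> x y1 \<le> prox_objective f \<gamma> x z"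
    and y2: "\<forall>z. prox_objective f \<gamma> x y2 \<le> prox_objective f \<gamma> x (z::'a)"
  shows "y1 = y2"
proof -
  have ninf: "f z \<noteq> -\<infinity>" for z using proper unfolding proper_fun_def by blast
  obtain w where "f w \<noteq> \<infinity>" using proper unfolding proper_fun_def by blast
  then have "prox_objective f \<gamma> x y1 \<noteq> \<infinity>"
    using y1[rule_format, of w] unfolding prox_objective_def by auto
  moreover have "prox_objective f \<gamma> x y1 \<noteq> -\<infinity>"
    using ninf[of y1] unfolding prox_objective_def by auto
  ultimately obtain m where m1: "prox_objective f \<gamma> x y1 = ereal m"
    by (cases "prox_objective f \<gamma> x y1") auto
  moreover have m2: "prox_objective f \<gamma> x y2 = ereal m"
    using y1 y2 m1 by (metis order_antisym)
  moreover have "\<forall>z. ereal m \<le> prox_objective f \<gamma> x z" using y1 m1 by simp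
  ultimately have "(dist y1 y2)\<^sup>2 \<le> 4 * \<gamma> * ((m - m) + (m - m))"
    using prox_objective_near_min_dist[OF cat conv \<gamma> _ ninf ninf] by blast
  then show ?thesis by simp
qed

lemma resolvent_minimizes:
  fixes f :: "'a::complete_space \<Rightarrow> ereal"
  assumes "CAT0 TYPE('a)" and "convex_fun f" and "lsc_fun f" and "proper_fun f"
    and "\<forall>z. ereal L \<le> f z" and "\<gamma> > 0"
  shows "prox_objective f \<gamma> x (resolvent f \<gamma> x) \<le> prox_objective f \<gamma> x z"
proof -
  have "\<exists>!y. \<forall>z. prox_objective f \<gamma> x y \<le> prox_objective f \<gamma> x z"
    using prox_objective_has_min[OF assms] prox_objective_min_unique[OF assms(1,2,4,6)] by blast
  from theI'[OF this] show ?thesis unfolding resolvent_prox_objective by blast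
qed

lemma le_of_le_add_small_mult:
  fixes x y c :: real
  assumes c: "0 \<le> c" and le: "\<And>t. 0 < t \<Longrightarrow> t \<le> 1 \<Longrightarrow> x \<le> y + t * c"
  shows "x \<le> y"
proof (rule field_le_epsilon)
  fix e :: real assume e: "0 < e"
  define t where "t = min 1 (e / (c + 1))"
  have t: "0 < t" "t \<le> 1" unfolding t_def using e c by auto
  have "t * c \<le> e / (c + 1) * c" unfolding t_def using c by (intro mult_right_mono) auto
  also have "\<dots> \<le> e" using c e by (simp add: field_simps)
  finally show "x \<le> y + e" using le[OF t] by linarith
qed

lemma resolvent_fejer_ineq:
  fixes f :: "'a::complete_space \<Rightarrow> ereal"
  assumes cat: "CAT0 TYPE('a)" and conv: "convex_fun f" and lsc: "lsc_fun f"
    and proper: "proper_fun f" and \<gamma>: "\<gamma> > 0"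
    and pmin: "\<forall>z. f p \<le> f z" and fp: "f p = ereal P"
  obtains F where "f (resolvent f \<gamma> x) = ereal F" and "P \<le> F"
    and "(dist (resolvent f \<gamma> x) p)\<^sup>2 + 2 * \<gamma> * (F - P) \<le> (dist x p)\<^sup>2"
proof -
  define z where "z = resolvent f \<gamma> x"
  have lb: "\<forall>w. ereal P \<le> f w" using pmin fp by simp
  have zmin: "prox_objective f \<gamma> x z \<le> prox_objective f \<gamma> x w" for w
    unfolding z_def by (rule resolvent_minimizes[OF cat conv lsc proper lb \<gamma>])
  have "prox_objective f \<gamma> x z \<le> ereal (P + (dist x p)\<^sup>2 / (2 * \<gamma>))"
    using zmin[of p] fp unfolding prox_objective_def by simp
  then have "prox_objective f \<gamma> x z \<noteq> \<infinity>" by auto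
  then obtain F where fz: "f z = ereal F"
    and hz: "prox_objective f \<gamma> x z = ereal (F + (dist x z)\<^sup>2 / (2 * \<gamma>))"
    by (rule prox_objective_finite[OF lb])
  have "P \<le> F" using lb fz by (metis ereal_less_eq(3))
  define A B C where "A = (dist x z)\<^sup>2 / (2 * \<gamma>)" and "B = (dist x p)\<^sup>2 / (2 * \<gamma>)"
    and "C = (dist z p)\<^sup>2 / (2 * \<gamma>)"
  \<comment> \<open>compare z with the points of the geodesic from z towards p, and let them tend to z\<close>
  have near: "F + A + C \<le> P + B + t * C" if t: "0 < t" "t \<le> 1" for t
  proof -
    have "ereal (F + A) \<le> prox_objective f \<gamma> x (geo_comb t z p)"
      using zmin[of "geo_comb t z p"] hz unfolding A_def by simp
    also have "\<dots> \<le> ereal ((1 - t) * (F + A) + t * (P + B) - t * (1 - t) * C)"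
      using prox_objective_geo_comb_le[OF cat conv \<gamma> _ _ fz fp, of t x] t
      unfolding A_def B_def C_def by (simp add: mult.assoc)
    finally have "t * (F + A + C) \<le> t * (P + B + t * C)"
      by (simp add: algebra_simps)
    then show ?thesis using t by simp
  qed
  have "0 \<le> C" unfolding C_def using \<gamma> by simp
  then have "F + A + C \<le> P + B" using near by (rule le_of_le_add_small_mult)
  then have "2 * \<gamma> * (F + A + C) \<le> 2 * \<gamma> * (P + B)" using \<gamma> by simp
  then have "(dist z p)\<^sup>2 + 2 * \<gamma> * (F - P) \<le> (dist x p)\<^sup>2 - (dist x z)\<^sup>2"
    using \<gamma> unfolding A_def B_def C_def by (simp add: algebra_simps)
  then have "(dist z p)\<^sup>2 + 2 * \<gamma> * (F - P) \<le> (dist x p)\<^sup>2"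
    using zero_le_power2[of "dist x z"] by linarith
  then show ?thesis using that fz \<open>P \<le> F\<close> unfolding z_def by blast
qed

lemma sum_squares_le_of_decrements:
  fixes a E :: "nat \<Rightarrow> real"
  assumes a: "\<And>j. j \<le> T \<Longrightarrow> 0 \<le> a j \<and> a j \<le> E j - E (Suc j)"
    and E: "\<And>j. j \<le> Suc T \<Longrightarrow> 0 \<le> E j \<and> E j \<le> B"
  shows "(\<Sum>j\<le>T. (a j)\<^sup>2) \<le> B\<^sup>2"
proof -
  have B: "0 \<le> B" using E[of 0] by simp
  have "(\<Sum>j\<le>T. (a j)\<^sup>2) \<le> (\<Sum>j\<le>T. B * a j)"
  proof (rule sum_mono)
    fix j assume "j \<in> {..T}"
    then have "0 \<le> a j" "a j \<le> B" using a[of j] E[of j] E[of "Suc j"] by auto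
    then show "(a j)\<^sup>2 \<le> B * a j" by (simp add: power2_eq_square mult_right_mono)
  qed
  also have "\<dots> \<le> B * (\<Sum>j\<le>T. E j - E (Suc j))"
    unfolding sum_distrib_left[symmetric] using a B by (intro mult_left_mono sum_mono) auto
  also have "\<dots> = B * (E 0 - E (Suc T))" by (simp add: sum_telescope)
  also have "\<dots> \<le> B * B" using E[of 0] E[of "Suc T"] B by (intro mult_left_mono) auto
  finally show ?thesis by (simp add: power2_eq_square)
qed

lemma Omega_index_bound:
  assumes ps: "0 < ps" and b: "0 < b"
  shows "((real b)\<^sup>2)\<^sup>2 < ps\<^sup>2 * real (b\<^sup>2 * (nat \<lceil>2 * real b / (2 * ps)\<rceil> + 1)\<^sup>2)"
proof -
  define M where "M = nat \<lceil>2 * real b / (2 * ps)\<rceil>"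
  have "real b / ps \<le> real M" unfolding M_def by linarith
  then have "real b < ps * (real M + 1)" using ps by (simp add: pos_divide_le_eq algebra_simps)
  then have "(real b)\<^sup>2 < (ps * (real M + 1))\<^sup>2" using b by (intro power_strict_mono) auto
  then have "(real b)\<^sup>2 * (real b)\<^sup>2 < (real b)\<^sup>2 * (ps * (real M + 1))\<^sup>2"
    using b by (intro mult_strict_left_mono) auto
  then show ?thesis unfolding M_def[symmetric] by (simp add: power2_eq_square algebra_simps)
qed

lemma sum_sq_steps_le_while_far:
  fixes D \<gamma> :: "nat \<Rightarrow> real"
  assumes \<gamma>: "\<forall>n. 0 < \<gamma> n" and \<psi>_mono: "mono_on {0..} \<psi>" and \<epsilon>: "0 \<le> \<epsilon>" "0 \<le> \<psi> \<epsilon>"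
    and D: "\<forall>j. 0 \<le> D j \<and> D j \<le> B"
    and step: "\<forall>n. (D (Suc n))\<^sup>2 + \<gamma> n * \<psi> (D (Suc n)) \<le> (D n)\<^sup>2"
    and far: "\<forall>j\<le>T. \<epsilon> \<le> D (Suc j)"
  shows "(\<psi> \<epsilon>)\<^sup>2 * (\<Sum>j=0..T. (\<gamma> j)\<^sup>2) \<le> (B\<^sup>2)\<^sup>2"
proof -
  have decrement: "\<gamma> j * \<psi> \<epsilon> \<le> (D j)\<^sup>2 - (D (Suc j))\<^sup>2" if "j \<le> T" for j
  proof -
    have "\<psi> \<epsilon> \<le> \<psi> (D (Suc j))" using mono_onD[OF \<psi>_mono] \<epsilon> far that by simp
    then have "\<gamma> j * \<psi> \<epsilon> \<le> \<gamma> j * \<psi> (D (Suc j))" using \<gamma> by (simp add: less_imp_le)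
    then show ?thesis using step[rule_format, of j] by linarith
  qed
  have "(\<Sum>j\<le>T. (\<gamma> j * \<psi> \<epsilon>)\<^sup>2) \<le> (B\<^sup>2)\<^sup>2"
  proof (rule sum_squares_le_of_decrements[where E = "\<lambda>j. (D j)\<^sup>2"])
    show "0 \<le> \<gamma> j * \<psi> \<epsilon> \<and> \<gamma> j * \<psi> \<epsilon> \<le> (D j)\<^sup>2 - (D (Suc j))\<^sup>2" if "j \<le> T" for j
      using decrement[OF that] \<gamma> \<epsilon>(2) by (simp add: less_imp_le)
    show "0 \<le> (D j)\<^sup>2 \<and> (D j)\<^sup>2 \<le> B\<^sup>2" for j
      using D by (simp add: power_mono)
  qed
  then show ?thesis
    by (simp add: atLeast0AtMost power_mult_distrib sum_distrib_left mult.commute)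
qed

lemma descent_rate:
  fixes D \<gamma> :: "nat \<Rightarrow> real"
  assumes \<gamma>: "\<forall>n. \<gamma> n > 0" and \<theta>: "divergence_rate \<gamma> \<theta>"
    and \<psi>_mono: "mono_on {0..} \<psi>" and \<psi>_nonneg: "\<forall>t\<ge>0. 0 \<le> \<psi> t" and \<psi>_pos: "\<forall>t>0. 0 < \<psi> t"
    and D_nonneg: "\<forall>n. 0 \<le> D n" and D0: "D 0 \<le> real b"
    and step: "\<forall>n. (D (Suc n))\<^sup>2 + \<gamma> n * \<psi> (D (Suc n)) \<le> (D n)\<^sup>2"
    and n: "Omega b \<theta> \<psi> k \<le> n"
  shows "D n \<le> 1 / (real k + 1)"
proof (rule ccontr)
  define \<epsilon> where "\<epsilon> = 1 / (real k + 1)"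
  define K where "K = b\<^sup>2 * (nat \<lceil>2 * real b / (2 * \<psi> \<epsilon>)\<rceil> + 1)\<^sup>2"
  assume "\<not> D n \<le> 1 / (real k + 1)"
  then have Dn: "\<epsilon> < D n" unfolding \<epsilon>_def by simp
  have \<epsilon>: "0 < \<epsilon>" unfolding \<epsilon>_def by simp
  have "D (Suc j) \<le> D j" for j
  proof -
    have "0 \<le> \<gamma> j * \<psi> (D (Suc j))" using \<gamma> \<psi>_nonneg D_nonneg by (simp add: less_imp_le)
    then have "(D (Suc j))\<^sup>2 \<le> (D j)\<^sup>2" using step[rule_format, of j] by linarith
    then show ?thesis using D_nonneg by (meson power2_le_imp_le)
  qed
  then have dec: "decseq D" by (rule decseq_SucI)
  have Db: "D j \<le> real b" for j using decseqD[OF dec, of 0 j] D0 by simp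
  have "0 < real b" using Db[of n] Dn \<epsilon> by linarith
  then have b: "0 < b" by simp
  have "Omega b \<theta> \<psi> k = \<theta> K + 1" unfolding Omega_def K_def \<epsilon>_def ..
  then have "\<forall>j\<le>\<theta> K. \<epsilon> \<le> D (Suc j)"
  proof (intro allI impI)
    fix j assume "j \<le> \<theta> K"
    then have "Suc j \<le> n" using n \<open>Omega b \<theta> \<psi> k = \<theta> K + 1\<close> by simp
    then show "\<epsilon> \<le> D (Suc j)" using Dn decseqD[OF dec] by (meson less_imp_le order_trans)
  qed
  moreover have "0 \<le> \<psi> \<epsilon>" "\<forall>j. 0 \<le> D j \<and> D j \<le> real b"
    using \<psi>_nonneg \<epsilon> D_nonneg Db by simp_all
  ultimately have "(\<psi> \<epsilon>)\<^sup>2 * (\<Sum>j=0..\<theta> K. (\<gamma> j)\<^sup>2) \<le> ((real b)\<^sup>2)\<^sup>2"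
    using sum_sq_steps_le_while_far[OF \<gamma> \<psi>_mono less_imp_le[OF \<epsilon>] _ _ step] by blast
  moreover have "(\<psi> \<epsilon>)\<^sup>2 * real K \<le> (\<psi> \<epsilon>)\<^sup>2 * (\<Sum>j=0..\<theta> K. (\<gamma> j)\<^sup>2)"
    using \<theta> unfolding divergence_rate_def by (simp add: mult_left_mono)
  moreover have "((real b)\<^sup>2)\<^sup>2 < (\<psi> \<epsilon>)\<^sup>2 * real K"
    unfolding K_def using \<psi>_pos \<epsilon> b by (intro Omega_index_bound) auto
  ultimately show False by linarith
qed

lemma unif_convex_on_min_gap:
  assumes uc: "unif_convex_on f C \<psi>" and yC: "y \<in> C" and pC: "p \<in> C"
    and fy: "f y = ereal Fy" and fp: "f p = ereal P" and pmin: "\<forall>z. f p \<le> f z"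
  shows "\<psi> (dist y p) / 2 \<le> Fy - P"
proof -
  have "ereal P \<le> f (geo_comb (1/2) y p)" using pmin fp by metis
  also have "\<dots> \<le> ereal (Fy / 2 + P / 2 - \<psi> (dist y p) / 4)"
    using uc[unfolded unif_convex_on_def, rule_format, OF yC pC, of "1/2"] fy fp by simp
  finally show ?thesis by simp
qed

lemma unif_convex_on_Argmin_unique:
  assumes uc: "unif_convex_on f C \<psi>" and \<psi>_pos: "\<forall>t>0. 0 < \<psi> t"
    and "p \<in> C" "q \<in> C" "p \<in> Argmin f" "q \<in> Argmin f" and fp: "f p = ereal P"
  shows "q = p"
proof -
  have pmin: "\<forall>z. f p \<le> f z" and "f q \<le> f p" using assms(5,6) unfolding Argmin_def by blast+
  then have "f q = ereal P" using fp by (simp add: order_antisym)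
  then have "\<psi> (dist q p) / 2 \<le> P - P" by (rule unif_convex_on_min_gap[OF uc assms(4,3) _ fp pmin])
  then have "\<psi> (dist q p) \<le> 0" by simp
  then show ?thesis using \<psi>_pos by (meson not_le zero_less_dist_iff)
qed

lemma proximal_point_fejer:
  fixes f :: "'a::complete_space \<Rightarrow> ereal"
  assumes "CAT0 TYPE('a)" and "convex_fun f" and "lsc_fun f" and "proper_fun f"
    and \<gamma>: "\<forall>n. \<gamma> n > 0" and pmin: "\<forall>z. f p \<le> f z" and fp: "f p = ereal P"
    and xs: "\<forall>n. xs (Suc n) = resolvent f (\<gamma> n) (xs n)"
  obtains F where "f (xs (Suc n)) = ereal F" and "P \<le> F"
    and "(dist (xs (Suc n)) p)\<^sup>2 + 2 * \<gamma> n * (F - P) \<le> (dist (xs n) p)\<^sup>2"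
proof -
  obtain F where "f (resolvent f (\<gamma> n) (xs n)) = ereal F" "P \<le> F"
    "(dist (resolvent f (\<gamma> n) (xs n)) p)\<^sup>2 + 2 * \<gamma> n * (F - P) \<le> (dist (xs n) p)\<^sup>2"
    by (rule resolvent_fejer_ineq[OF assms(1-4) \<gamma>[rule_format] pmin fp])
  then show thesis using that xs by simp
qed

lemma proximal_point_decseq:
  fixes f :: "'a::complete_space \<Rightarrow> ereal"
  assumes "CAT0 TYPE('a)" and "convex_fun f" and "lsc_fun f" and "proper_fun f"
    and \<gamma>: "\<forall>n. \<gamma> n > 0" and "\<forall>z. f p \<le> f z" and "f p = ereal P"
    and "\<forall>n. xs (Suc n) = resolvent f (\<gamma> n) (xs n)"
  shows "decseq (\<lambda>n. dist (xs n) p)"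
proof (rule decseq_SucI)
  fix n
  obtain F where "f (xs (Suc n)) = ereal F" "P \<le> F"
    "(dist (xs (Suc n)) p)\<^sup>2 + 2 * \<gamma> n * (F - P) \<le> (dist (xs n) p)\<^sup>2"
    by (rule proximal_point_fejer[OF assms])
  moreover have "0 \<le> 2 * \<gamma> n * (F - P)" using \<gamma> calculation(2) by (simp add: less_imp_le)
  ultimately have "(dist (xs (Suc n)) p)\<^sup>2 \<le> (dist (xs n) p)\<^sup>2" by linarith
  then show "dist (xs (Suc n)) p \<le> dist (xs n) p" by (meson power2_le_imp_le zero_le_dist)
qed

lemma proximal_point_dist_descent:
  fixes f :: "'a::complete_space \<Rightarrow> ereal"
  assumes "CAT0 TYPE('a)" and "convex_fun f" and "lsc_fun f" and "proper_fun f"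
    and \<gamma>: "\<forall>n. \<gamma> n > 0" and pmin: "\<forall>z. f p \<le> f z" and fp: "f p = ereal P"
    and "\<forall>n. xs (Suc n) = resolvent f (\<gamma> n) (xs n)"
    and uc: "unif_convex_on f (cball p r) \<psi>" and x0: "xs 0 \<in> cball p r"
  shows "(dist (xs (Suc n)) p)\<^sup>2 + \<gamma> n * \<psi> (dist (xs (Suc n)) p) \<le> (dist (xs n) p)\<^sup>2"
proof -
  obtain F where fx: "f (xs (Suc n)) = ereal F" and "P \<le> F"
    and fejer: "(dist (xs (Suc n)) p)\<^sup>2 + 2 * \<gamma> n * (F - P) \<le> (dist (xs n) p)\<^sup>2"
    by (rule proximal_point_fejer[OF assms(1-8)])
  have "dist (xs (Suc n)) p \<le> dist (xs 0) p"
    using decseqD[OF proximal_point_decseq[OF assms(1-8)], of 0 "Suc n"] by simp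
  then have "xs (Suc n) \<in> cball p r" using x0 by (simp add: dist_commute)
  moreover have "p \<in> cball p r" using x0 by (simp add: order_trans[OF zero_le_dist])
  ultimately have "\<psi> (dist (xs (Suc n)) p) / 2 \<le> F - P"
    by (rule unif_convex_on_min_gap[OF uc _ _ fx fp pmin])
  then have "\<gamma> n * \<psi> (dist (xs (Suc n)) p) \<le> 2 * \<gamma> n * (F - P)"
    using \<gamma> mult_left_mono[of "\<psi> (dist (xs (Suc n)) p) / 2" "F - P" "2 * \<gamma> n"] by simp
  then show ?thesis using fejer by linarith
qed

lemma LIMSEQ_of_rate:
  assumes "\<forall>k. \<forall>n\<ge>\<Phi> k. dist (X n) L \<le> 1 / (real k + 1)"
  shows "X \<longlonglongrightarrow> L"
proof (rule metric_LIMSEQ_I)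
  fix r :: real assume r: "0 < r"
  obtain k :: nat where "1 / r < real k" using reals_Archimedean2 by blast
  then have "1 / (real k + 1) < r" using r by (simp add: field_simps)
  then show "\<exists>no. \<forall>n\<ge>no. dist (X n) L < r" using assms by (meson order_le_less_trans)
qed

theorem proposition5p4:
  fixes f :: "'a::complete_space \<Rightarrow> ereal"
    and \<psi> :: "real \<Rightarrow> real"
    and \<gamma> :: "nat \<Rightarrow> real"
    and \<theta> :: "nat \<Rightarrow> nat"
    and b :: nat
    and p x :: 'a
    and xs :: "nat \<Rightarrow> 'a"
  assumes "CAT0 TYPE('a)"
    and "convex_fun f" and "proper_fun f" and "lsc_fun f"
    and "Argmin f \<noteq> {}"
    and "\<forall>t\<ge>0. \<psi> t \<ge> 0"
    and "mono_on {0..} \<psi>"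
    and "\<forall>t\<ge>0. \<psi> t = 0 \<longleftrightarrow> t = 0"
    and "\<forall>n. \<gamma> n > 0"
    and "\<not> summable (\<lambda>n. (\<gamma> n)\<^sup>2)"
    and "divergence_rate \<gamma> \<theta>"
    and "p \<in> Argmin f"
    and "unif_convex_on f (cball p (real b)) \<psi>"
    and "x \<in> cball p (real b)"
    and "xs 0 = x"
    and "\<forall>n. xs (Suc n) = resolvent f (\<gamma> n) (xs n)"
  shows "(\<forall>q\<in>cball p (real b). q \<in> Argmin f \<longrightarrow> q = p)
         \<and> xs \<longlonglongrightarrow> p
         \<and> (\<forall>k. \<forall>n\<ge>Omega b \<theta> \<psi> k. dist (xs n) p \<le> 1 / (real k + 1))"
proof -
  note A = assms
  have pmin: "\<forall>z. f p \<le> f z" using A(12) unfolding Argmin_def by blast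
  obtain w where "f w \<noteq> \<infinity>" using A(3) unfolding proper_fun_def by blast
  moreover have "f p \<noteq> -\<infinity>" using A(3) unfolding proper_fun_def by blast
  ultimately obtain P where fp: "f p = ereal P" using pmin[rule_format, of w] by (cases "f p") auto
  have \<psi>_pos: "\<forall>t>0. 0 < \<psi> t" using A(6,8) by (metis less_le)
  have unique: "\<forall>q\<in>cball p (real b). q \<in> Argmin f \<longrightarrow> q = p"
    using unif_convex_on_Argmin_unique[OF A(13) \<psi>_pos _ _ A(12) _ fp] by simp
  have x0: "xs 0 \<in> cball p (real b)" using A(14,15) by simp
  have "\<forall>n. (dist (xs (Suc n)) p)\<^sup>2 + \<gamma> n * \<psi> (dist (xs (Suc n)) p) \<le> (dist (xs n) p)\<^sup>2"
    using proximal_point_dist_descent[OF A(1,2,4,3,9) pmin fp A(16,13) x0] by blast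
  moreover have "\<forall>n. 0 \<le> dist (xs n) p" "dist (xs 0) p \<le> real b"
    using x0 by (simp_all add: dist_commute)
  ultimately have rate: "\<forall>k. \<forall>n\<ge>Omega b \<theta> \<psi> k. dist (xs n) p \<le> 1 / (real k + 1)"
    using descent_rate[where D = "\<lambda>n. dist (xs n) p", OF A(9,11,7,6) \<psi>_pos] by blast
  show ?thesis using unique rate LIMSEQ_of_rate[OF rate] by blast
qed

end
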